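(* Consider the atomic model under the Shapley scheme with one large player of stake $a$ and all other players of stake $1$. If a Nash equilibrium partition contains two pools $S_1,S_2$ each consisting only of players of stake $1$, then $\big||S_1|-|S_2|\big|\le 1$.
   Context: Atomic model with threshold $h$: one player has stake $a$ and all others stake $1$, where $h,a$ are integers with $2\le a\le h-1$. Pools partition the players; a pool $S$ has reward $\rho(S)=1$ if its total stake is at least $h$ (winning) and $0$ otherwise. Shapley scheme: player $i$ in pool $S$ receives $\phi_i(S)=\sum_{T\subseteq S\setminus\{i\}}\frac{|T|!(|S|-|T|-1)!}{|S|!}(\rho(T\cup\{i\})-\rho(T))$. A partition into winning pools is a Nash equilibrium if no player can strictly increase her payment by moving to another pool of the partition or opening a new pool alone. *)

theory Defs
  imports Complex_Main "HOL-Library.Disjoint_Sets"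
begin

definition total_stake :: "('p \<Rightarrow> nat) \<Rightarrow> 'p set \<Rightarrow> nat" where
  "total_stake w S = (\<Sum>i\<in>S. w i)"

definition rho :: "nat \<Rightarrow> ('p \<Rightarrow> nat) \<Rightarrow> 'p set \<Rightarrow> real" where
  "rho h w S = (if total_stake w S \<ge> h then 1 else 0)"

definition winning :: "nat \<Rightarrow> ('p \<Rightarrow> nat) \<Rightarrow> 'p set \<Rightarrow> bool" where
  "winning h w S \<longleftrightarrow> total_stake w S \<ge> h"

definition shapley :: "nat \<Rightarrow> ('p \<Rightarrow> nat) \<Rightarrow> 'p \<Rightarrow> 'p set \<Rightarrow> real" where
  "shapley h w i S =
     (\<Sum>T\<in>Pow (S - {i}).
        (fact (card T) * fact (card S - card T - 1) / fact (card S))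
        * (rho h w (T \<union> {i}) - rho h w T))"

definition nash_eq :: "nat \<Rightarrow> ('p \<Rightarrow> nat) \<Rightarrow> 'p set \<Rightarrow> 'p set set \<Rightarrow> bool" where
  "nash_eq h w N P \<longleftrightarrow>
     partition_on N P \<and> (\<forall>S\<in>P. winning h w S) \<and>
     (\<forall>S\<in>P. \<forall>i\<in>S.
        (\<forall>T\<in>P. T \<noteq> S \<longrightarrow> shapley h w i (T \<union> {i}) \<le> shapley h w i S) \<and>
        shapley h w i {i} \<le> shapley h w i S)"

end

theory Submission
  imports Defs
begin

text \<open>In a pool of unit-stake players a coalition wins iff it has at least \<open>h\<close> members, so a
  player is pivotal exactly for the coalitions of size \<open>h - 1\<close>, and by symmetry every member of
  the pool receives the Shapley payment \<open>1 / |S|\<close>. If a unit-stake player of \<open>S\<^sub>1\<close> does not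
  profit from moving to \<open>S\<^sub>2\<close>, then \<open>1 / (|S\<^sub>2| + 1) \<le> 1 / |S\<^sub>1|\<close>, i.e. \<open>|S\<^sub>1| \<le> |S\<^sub>2| + 1\<close>;
  exchanging the two pools gives the claim.\<close>

lemma total_stake_unit:
  assumes "\<forall>j\<in>S. w j = 1"
  shows "total_stake w S = card S"
  unfolding total_stake_def using assms by simp

lemma binomial_fact_weight:
  assumes "k \<le> m"
  shows "real (m choose k) * (fact k * fact (m - k) / fact (Suc m)) = 1 / real (Suc m)"
proof -
  have "real (fact k * fact (m - k) * (m choose k)) = real (fact m)"
    using binomial_fact_lemma[OF assms] by (simp only:)
  then have "fact k * fact (m - k) * real (m choose k) = (fact m :: real)"
    by simp
  then have "real (m choose k) * (fact k * fact (m - k) / fact (Suc m)) = fact m / fact (Suc m)"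
    by (simp add: mult_ac)
  also have "\<dots> = 1 / real (Suc m)"
    by (simp add: fact_Suc del: of_nat_Suc)
  finally show ?thesis .
qed

lemma rho_marginal_unit:
  assumes "\<forall>j\<in>T. w j = 1" and "w i = 1" and "finite T" and "i \<notin> T" and "1 \<le> h"
  shows "rho h w (T \<union> {i}) - rho h w T = (if card T = h - 1 then 1 else 0)"
proof -
  have stake_join: "total_stake w (T \<union> {i}) = card T + 1"
    using assms by (subst total_stake_unit) auto
  have stake: "total_stake w T = card T"
    using total_stake_unit[OF assms(1)] .
  consider "card T + 1 < h" | "card T + 1 = h" | "h \<le> card T"
    by linarith
  then show ?thesis
    unfolding rho_def stake_join stake using \<open>1 \<le> h\<close> by cases simp_all
qed

lemma nash_eq_move_not_profitable:
  assumes "nash_eq h w N P" and "S \<in> P" and "T \<in> P" and "T \<noteq> S" and "i \<in> S"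
  shows "shapley h w i (T \<union> {i}) \<le> shapley h w i S"
  using assms unfolding nash_eq_def by blast

lemma shapley_unit:
  assumes fin: "finite S" and unit: "\<forall>j\<in>S. w j = 1" and "i \<in> S"
    and "1 \<le> h" and "h \<le> card S"
  shows "shapley h w i S = 1 / real (card S)"
proof -
  have "card S > 0"
    using assms(3) fin card_gt_0_iff by blast
  then obtain m where m: "card S = Suc m"
    using gr0_implies_Suc by blast
  have card_rest: "card (S - {i}) = m"
    using assms(3) fin m by simp
  define c :: real where "c = fact (h - 1) * fact (m - (h - 1)) / fact (Suc m)"
  let ?pivotal = "{T \<in> Pow (S - {i}). card T = h - 1}"
  have "shapley h w i S = (\<Sum>T\<in>Pow (S - {i}). if card T = h - 1 then c else 0)"
    unfolding shapley_def
  proof (rule sum.cong)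
    fix T assume "T \<in> Pow (S - {i})"
    then have "T \<subseteq> S" "i \<notin> T"
      by auto
    moreover from \<open>T \<subseteq> S\<close> fin have "finite T"
      by (rule finite_subset)
    ultimately have "rho h w (T \<union> {i}) - rho h w T = (if card T = h - 1 then 1 else 0)"
      using unit \<open>i \<in> S\<close> \<open>1 \<le> h\<close> by (intro rho_marginal_unit) auto
    then show "fact (card T) * fact (card S - card T - 1) / fact (card S)
        * (rho h w (T \<union> {i}) - rho h w T) = (if card T = h - 1 then c else 0)"
      unfolding c_def m by simp
  qed simp
  also have "\<dots> = real (card ?pivotal) * c"
    using sum.inter_filter[of "Pow (S - {i})" "\<lambda>_. c" "\<lambda>T. card T = h - 1"] fin by simp
  also have "card ?pivotal = m choose (h - 1)"
    using n_subsets[of "S - {i}" "h - 1"] fin card_rest by (simp add: Pow_def)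
  also have "real (m choose (h - 1)) * c = 1 / real (card S)"
    unfolding c_def m using assms(4,5) m by (intro binomial_fact_weight) simp
  finally show ?thesis .
qed

lemma nash_eq_unit_pools_card_le:
  assumes "1 \<le> h" and ne: "nash_eq h w N P"
    and "S1 \<in> P" and "S2 \<in> P" and "S1 \<noteq> S2"
    and unit1: "\<forall>i\<in>S1. w i = 1" and unit2: "\<forall>i\<in>S2. w i = 1"
  shows "card S1 \<le> card S2 + 1"
proof -
  have "S1 \<inter> S2 = {}"
    using ne assms(3-5) unfolding nash_eq_def partition_on_def disjoint_def by blast
  have winning_card: "h \<le> card S" if "S \<in> P" "\<forall>i\<in>S. w i = 1" for S
    using ne that total_stake_unit[of S w] unfolding nash_eq_def winning_def by auto
  have card1: "h \<le> card S1" and card2: "h \<le> card S2"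
    using winning_card assms(3,4) unit1 unit2 by auto
  with \<open>1 \<le> h\<close> have "finite S1" "S1 \<noteq> {}" "finite S2"
    using card_gt_0_iff[of S1] card_gt_0_iff[of S2] by linarith+
  then obtain i where "i \<in> S1"
    by blast
  with \<open>S1 \<inter> S2 = {}\<close> have "i \<notin> S2"
    by blast
  then have card_join: "card (S2 \<union> {i}) = card S2 + 1"
    using \<open>finite S2\<close> by simp
  have "shapley h w i (S2 \<union> {i}) \<le> shapley h w i S1"
    using nash_eq_move_not_profitable[OF ne assms(3,4)] assms(5) \<open>i \<in> S1\<close> by blast
  moreover have "shapley h w i S1 = 1 / real (card S1)"
    using shapley_unit[OF \<open>finite S1\<close> unit1 \<open>i \<in> S1\<close> assms(1) card1] .
  moreover have "shapley h w i (S2 \<union> {i}) = 1 / real (card S2 + 1)"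
    using shapley_unit[of "S2 \<union> {i}" w i h] \<open>finite S2\<close> unit1 unit2 \<open>i \<in> S1\<close> assms(1) card2
      card_join by simp
  ultimately have "1 / real (card S2 + 1) \<le> 1 / real (card S1)"
    by simp
  then show ?thesis
    using card1 assms(1) by (simp add: divide_simps)
qed

theorem lemma3p8:
  fixes h a :: nat and w :: "'p \<Rightarrow> nat" and N :: "'p set" and b :: 'p
    and P :: "'p set set" and S1 S2 :: "'p set"
  assumes "2 \<le> a" and "a \<le> h - 1"
    and "finite N" and "b \<in> N" and "w b = a"
    and "\<forall>i\<in>N. i \<noteq> b \<longrightarrow> w i = 1"
    and "nash_eq h w N P"
    and "S1 \<in> P" and "S2 \<in> P" and "S1 \<noteq> S2"
    and "\<forall>i\<in>S1. w i = 1" and "\<forall>i\<in>S2. w i = 1"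
  shows "\<bar>int (card S1) - int (card S2)\<bar> \<le> 1"
proof -
  have "1 \<le> h"
    using assms(1,2) by linarith
  have "card S1 \<le> card S2 + 1"
    using nash_eq_unit_pools_card_le[OF \<open>1 \<le> h\<close> assms(7-12)] .
  moreover have "card S2 \<le> card S1 + 1"
    using nash_eq_unit_pools_card_le[OF \<open>1 \<le> h\<close> assms(7,9,8) assms(10)[symmetric] assms(12,11)] .
  ultimately show ?thesis
    by linarith
qed

end
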